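(* For every $\delta>0$ and $n\in\mathbb{N}$ there exists $N\in\mathbb{N}$ such that the following holds for every $N$-partitioned hypergraph $H$ and every choice of vertices $\gamma_{ik}\in V_{ik}$, $i<k$, $i,k\in[N]$, such that the degree of $\gamma_{ik}$ in every $(i,j,k)$-triad with $i<j<k$, $j\in[N]$, is at least $\delta$: there exist an induced $n$-partitioned subhypergraph $H'$ of $H$ with index set $I\subseteq[N]$ and vertices $\alpha_{ij},\beta_{ij}\in V_{ij}$, $i<j$, $i,j\in I$, such that $\{\alpha_{ij},\beta_{jk},\gamma_{ik}\}$ is an edge in the $(i,j,k)$-triad for all $i<j<k$, $i,j,k\in I$.
   Context: An $n$-partitioned hypergraph $H$ is a finite $3$-uniform hypergraph whose vertex set is partitioned into nonempty sets $V_{ij}$, $1\le i<j\le n$, such that every edge has, for some $1\le i<j<k\le n$, exactly one vertex in each of $V_{ij}$, $V_{ik}$, $V_{jk}$; the set of such edges is the $(i,j,k)$-triad. The degree of a vertex $v\in V_{ik}$ in the $(i,j,k)$-triad is the number of edges of that triad containing $v$ divided by $|V_{ij}||V_{jk}|$. For $I\subseteq[n]$, the induced subhypergraph with index set $I$ is the $|I|$-partitioned hypergraph with parts $V_{ij}$, $i<j$, $i,j\in I$ (indexed by elements of $I$) and all edges of $H$ contained in the union of these parts. *)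

theory Defs
  imports Complex_Main
begin

text \<open>An N-partitioned hypergraph is given by a family of parts V i j
  (only the pairs 1 \<le> i < j \<le> N are relevant) and a set E of edges
  (3-element vertex sets).  The vertex set is the union of the parts.\<close>

definition valid_pair :: "nat \<Rightarrow> nat \<Rightarrow> nat \<Rightarrow> bool" where
  "valid_pair N i j \<longleftrightarrow> 1 \<le> i \<and> i < j \<and> j \<le> N"

definition in_triad :: "(nat \<Rightarrow> nat \<Rightarrow> 'v set) \<Rightarrow> nat \<Rightarrow> nat \<Rightarrow> nat \<Rightarrow> 'v set \<Rightarrow> bool" where
  "in_triad V i j k e \<longleftrightarrow> (\<exists>a\<in>V i j. \<exists>b\<in>V i k. \<exists>c\<in>V j k. e = {a, b, c})"

definition partitioned_hypergraph ::
  "nat \<Rightarrow> (nat \<Rightarrow> nat \<Rightarrow> 'v set) \<Rightarrow> 'v set set \<Rightarrow> bool" where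
  "partitioned_hypergraph N V E \<longleftrightarrow>
     (\<forall>i j. valid_pair N i j \<longrightarrow> finite (V i j) \<and> V i j \<noteq> {}) \<and>
     (\<forall>i j i' j'. valid_pair N i j \<and> valid_pair N i' j' \<and> (i, j) \<noteq> (i', j')
         \<longrightarrow> V i j \<inter> V i' j' = {}) \<and>
     (\<forall>e\<in>E. \<exists>i j k. 1 \<le> i \<and> i < j \<and> j < k \<and> k \<le> N \<and> in_triad V i j k e)"

definition triad :: "(nat \<Rightarrow> nat \<Rightarrow> 'v set) \<Rightarrow> 'v set set \<Rightarrow> nat \<Rightarrow> nat \<Rightarrow> nat \<Rightarrow> 'v set set" where
  "triad V E i j k = {e \<in> E. in_triad V i j k e}"

definition triad_degree ::
  "(nat \<Rightarrow> nat \<Rightarrow> 'v set) \<Rightarrow> 'v set set \<Rightarrow> nat \<Rightarrow> nat \<Rightarrow> nat \<Rightarrow> 'v \<Rightarrow> real" where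
  "triad_degree V E i j k v =
     real (card {e \<in> triad V E i j k. v \<in> e}) / (real (card (V i j)) * real (card (V j k)))"

end

(*
  Colour each (2n+1)-subset X of {1..N} by whether X is linked at its median j: there are
  x_i in V_ij (i < j) and y_k in V_jk (k > j), for i, k in X, such that {x_i, y_k, gamma_ik} is an
  edge for all i < j < k in X. Ramsey's theorem gives either a 3n-set all of whose
  (2n+1)-subsets are linked at their medians, or a large set none of whose are.

  In the first case the middle third I of the 3n-set works: every j in I is the median of the
  2n+1 elements whose rank differs from that of j by at most n, and these contain I.

  The second case is impossible. Take j with M1 elements below and M2 above it. Choose each
  y_k to maximise the expected number of edges {x_i, y_k, gamma_ik} for uniformly random x_i,
  and then each x_i greedily; by the degree condition at least a delta-fraction of the pairs
  (i, k) then give edges. This bipartite graph contains a K_{n,n} once M2 is large compared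
  with binomial(M1, n), and its two sides together with j form a (2n+1)-set linked at j.
*)

theory Submission
  imports Defs "HOL-Library.Ramsey"
begin

section \<open>Averaging and double counting\<close>

lemma exists_ge_average:
  fixes g :: "'a \<Rightarrow> real"
  assumes "finite Y" "Y \<noteq> {}"
  shows "\<exists>y\<in>Y. sum g Y \<le> card Y * g y"
proof (rule ccontr)
  assume "\<not> ?thesis"
  then have "(\<Sum>y\<in>Y. card Y * g y) < (\<Sum>y\<in>Y. sum g Y)"
    using assms by (intro sum_strict_mono) auto
  then show False by (simp add: sum_distrib_left)
qed

lemma exists_choice_ge_average:
  fixes f :: "'i \<Rightarrow> 'a \<Rightarrow> real"
  assumes "\<And>i. i \<in> L \<Longrightarrow> finite (P i) \<and> P i \<noteq> {}"
  obtains x where "\<And>i. i \<in> L \<Longrightarrow> x i \<in> P i"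
    and "\<And>i. i \<in> L \<Longrightarrow> (\<Sum>a\<in>P i. f i a) \<le> card (P i) * f i (x i)"
proof -
  have "\<forall>i\<in>L. \<exists>a\<in>P i. (\<Sum>a\<in>P i. f i a) \<le> card (P i) * f i a"
    using assms exists_ge_average by blast
  then show thesis using that by metis
qed

lemma card_pairs_eq_sum:
  assumes "finite A" "finite B"
  shows "card {(a, b) \<in> A \<times> B. R a b} = (\<Sum>a\<in>A. card {b \<in> B. R a b})"
proof -
  have "{(a, b) \<in> A \<times> B. R a b} = (SIGMA a:A. {b \<in> B. R a b})" by auto
  then show ?thesis using assms by simp
qed

lemma sum_card_swap:
  assumes "finite A" "finite B"
  shows "(\<Sum>a\<in>A. card {b \<in> B. R a b}) = (\<Sum>b\<in>B. card {a \<in> A. R a b})"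
  by (rule sum_multicount_gen[OF assms]) simp

lemma card_large_values_lower_bound:
  fixes g :: "'a \<Rightarrow> real" and c U :: real
  assumes "finite S" "c \<ge> 0" "\<And>s. s \<in> S \<Longrightarrow> g s \<le> U"
    and "c * card S \<le> (\<Sum>s\<in>S. g s)"
  shows "c / 2 * card S \<le> card {s\<in>S. c/2 \<le> g s} * U"
proof -
  let ?B = "{s\<in>S. c/2 \<le> g s}" and ?C = "{s\<in>S. \<not> c/2 \<le> g s}"
  have "(\<Sum>s\<in>?B \<union> ?C. g s) = (\<Sum>s\<in>?B. g s) + (\<Sum>s\<in>?C. g s)"
    using assms(1) by (intro sum.union_disjoint) auto
  moreover have "?B \<union> ?C = S" by auto
  ultimately have "(\<Sum>s\<in>S. g s) = (\<Sum>s\<in>?B. g s) + (\<Sum>s\<in>?C. g s)" by simp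
  also have "\<dots> \<le> card ?B * U + card ?C * (c/2)"
    using assms(3) sum_mono[of ?C g "\<lambda>_. c/2"] sum_mono[of ?B g "\<lambda>_. U"]
    by (auto simp: mult.commute)
  also have "card ?C * (c/2) \<le> card S * (c/2)"
    using assms(1,2) by (intro mult_right_mono) (auto intro: card_mono)
  finally show ?thesis using assms(4) by (simp add: algebra_simps)
qed

section \<open>Complete bipartite subgraphs of dense bipartite graphs\<close>

lemma exists_choices_many_hits:
  fixes \<delta> :: real and T :: "'i \<Rightarrow> 'k \<Rightarrow> 'a \<Rightarrow> 'b \<Rightarrow> bool"
  assumes "finite L" "finite R"
    and P: "\<And>i. i \<in> L \<Longrightarrow> finite (P i) \<and> P i \<noteq> {}"
    and Q: "\<And>k. k \<in> R \<Longrightarrow> finite (Q k) \<and> Q k \<noteq> {}"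
    and dense: "\<And>i k. i \<in> L \<Longrightarrow> k \<in> R \<Longrightarrow>
      \<delta> * card (P i) * card (Q k) \<le> card {(a, b) \<in> P i \<times> Q k. T i k a b}"
  obtains x y where "\<And>i. i \<in> L \<Longrightarrow> x i \<in> P i" "\<And>k. k \<in> R \<Longrightarrow> y k \<in> Q k"
    and "\<delta> * card L * card R \<le> card {(i, k) \<in> L \<times> R. T i k (x i) (y k)}"
proof -
  define w where "w i k b = card {a \<in> P i. T i k a b} / card (P i)" for i k b
  have w_sum: "\<delta> * card (Q k) \<le> (\<Sum>b\<in>Q k. w i k b)" if "i \<in> L" "k \<in> R" for i k
  proof -
    have "card {(a, b) \<in> P i \<times> Q k. T i k a b} = (\<Sum>a\<in>P i. card {b \<in> Q k. T i k a b})"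
      using P[OF that(1)] Q[OF that(2)] by (intro card_pairs_eq_sum) auto
    also have "\<dots> = (\<Sum>b\<in>Q k. card {a \<in> P i. T i k a b})"
      using P[OF that(1)] Q[OF that(2)] by (intro sum_card_swap) auto
    finally have "\<delta> * card (P i) * card (Q k) \<le> (\<Sum>b\<in>Q k. card {a \<in> P i. T i k a b})"
      using dense[OF that] by (simp only: of_nat_sum)
    moreover have "card (P i) > 0" using P[OF that(1)] by (simp add: card_gt_0_iff)
    ultimately show ?thesis
      by (simp add: w_def pos_le_divide_eq mult_ac flip: sum_divide_distrib)
  qed
  obtain y where y: "\<And>k. k \<in> R \<Longrightarrow> y k \<in> Q k"
    and y_avg: "\<And>k. k \<in> R \<Longrightarrow> (\<Sum>b\<in>Q k. \<Sum>i\<in>L. w i k b) \<le> card (Q k) * (\<Sum>i\<in>L. w i k (y k))"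
    using exists_choice_ge_average[of R Q "\<lambda>k b. \<Sum>i\<in>L. w i k b", OF Q] by blast
  have y_large: "\<delta> * card L \<le> (\<Sum>i\<in>L. w i k (y k))" if "k \<in> R" for k
  proof -
    have "card (Q k) * (\<delta> * card L) = (\<Sum>i\<in>L. \<delta> * card (Q k))" by simp
    also have "\<dots> \<le> (\<Sum>i\<in>L. \<Sum>b\<in>Q k. w i k b)" using w_sum that by (intro sum_mono) auto
    also have "\<dots> = (\<Sum>b\<in>Q k. \<Sum>i\<in>L. w i k b)" by (rule sum.swap)
    also have "\<dots> \<le> card (Q k) * (\<Sum>i\<in>L. w i k (y k))" by (rule y_avg[OF that])
    finally show ?thesis using Q[OF that] by (simp add: card_gt_0_iff)
  qed
  obtain x where x: "\<And>i. i \<in> L \<Longrightarrow> x i \<in> P i"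
    and x_avg: "\<And>i. i \<in> L \<Longrightarrow> (\<Sum>a\<in>P i. real (card {k \<in> R. T i k a (y k)}))
      \<le> real (card (P i)) * card {k \<in> R. T i k (x i) (y k)}"
    using exists_choice_ge_average[of L P "\<lambda>i a. card {k \<in> R. T i k a (y k)}", OF P] by blast
  have x_large: "(\<Sum>k\<in>R. w i k (y k)) \<le> card {k \<in> R. T i k (x i) (y k)}" if "i \<in> L" for i
  proof -
    have "card (P i) * (\<Sum>k\<in>R. w i k (y k)) = (\<Sum>k\<in>R. card {a \<in> P i. T i k a (y k)})"
      using P[OF that] by (simp add: w_def sum_distrib_left)
    also have "\<dots> = (\<Sum>a\<in>P i. card {k \<in> R. T i k a (y k)})"
      using sum_card_swap[of R "P i"] P[OF that] \<open>finite R\<close> by (simp only: of_nat_sum)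
    also have "\<dots> \<le> real (card (P i)) * card {k \<in> R. T i k (x i) (y k)}"
      using x_avg[OF that] by simp
    finally show ?thesis using P[OF that] by (simp add: card_gt_0_iff)
  qed
  have "\<delta> * card L * card R = (\<Sum>k\<in>R. \<delta> * card L)" by simp
  also have "\<dots> \<le> (\<Sum>k\<in>R. \<Sum>i\<in>L. w i k (y k))" using y_large by (intro sum_mono) auto
  also have "\<dots> = (\<Sum>i\<in>L. \<Sum>k\<in>R. w i k (y k))" by (rule sum.swap)
  also have "\<dots> \<le> (\<Sum>i\<in>L. real (card {k \<in> R. T i k (x i) (y k)}))"
    using x_large by (intro sum_mono) auto
  also have "\<dots> = card {(i, k) \<in> L \<times> R. T i k (x i) (y k)}"
    using assms(1,2) by (simp only: card_pairs_eq_sum of_nat_sum)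
  finally show ?thesis using that x y by blast
qed

lemma dense_bipartite_contains_complete:
  fixes c :: real
  assumes "finite L" "finite R" "L \<noteq> {}" "G \<subseteq> L \<times> R"
    and dense: "c * card L * card R \<le> card G"
    and small_n: "n \<le> c/2 * card L"
    and large_R: "(card L choose n) * n < c/2 * card R"
  obtains A B where "A \<subseteq> L" "B \<subseteq> R" "card A = n" "card B = n" "A \<times> B \<subseteq> G"
proof -
  define N where "N k = {i \<in> L. (i, k) \<in> G}" for k
  define K where "K = {k \<in> R. c * card L / 2 \<le> card (N k)}"
  have "G = {(i, k) \<in> L \<times> R. (i, k) \<in> G}" using assms(4) by auto
  then have "card G = (\<Sum>i\<in>L. card {k \<in> R. (i, k) \<in> G})"
    using card_pairs_eq_sum[OF assms(1,2), of "\<lambda>i k. (i, k) \<in> G"] by argo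
  also have "\<dots> = (\<Sum>k\<in>R. card (N k))"
    unfolding N_def by (rule sum_card_swap[OF assms(1,2)])
  finally have card_G: "card G = (\<Sum>k\<in>R. card (N k))" .
  have "0 < c/2 * card R" using large_R of_nat_0_le_iff by (rule le_less_trans[rotated])
  then have "c > 0" by (simp add: zero_less_mult_iff)
  have "c * card L / 2 * card R \<le> real (card K) * card L"
    unfolding K_def
  proof (rule card_large_values_lower_bound)
    show "real (card (N k)) \<le> card L" for k unfolding N_def using assms(1) by (simp add: card_mono)
  qed (use assms(2) \<open>c > 0\<close> dense card_G in auto)
  then have "c/2 * card R \<le> card K" using assms(1,3) by (simp add: field_simps card_gt_0_iff)
  then have K_large: "(card L choose n) * n < card K" using large_R by linarith
  have "n \<le> card (N k)" if "k \<in> K" for k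
    using that small_n unfolding K_def by (simp flip: of_nat_le_iff)
  then have "\<exists>S. S \<subseteq> N k \<and> card S = n" if "k \<in> K" for k
    using that obtain_subset_with_card_n by metis
  then obtain S where S: "\<And>k. k \<in> K \<Longrightarrow> S k \<subseteq> N k \<and> card (S k) = n" by metis
  have S_nsets: "S \<in> K \<rightarrow> nsets L n"
    using S assms(1) unfolding nsets_def N_def by (auto intro: finite_subset)
  moreover have "K \<noteq> {}" using K_large by auto
  ultimately have "nsets L n \<noteq> {}" by blast
  then obtain A where A: "A \<in> nsets L n" and "card K \<le> (card L choose n) * card (S -` {A} \<inter> K)"
    using pigeonhole_card[OF S_nsets _ finite_imp_finite_nsets[OF assms(1)]] assms(2)
    unfolding K_def by (auto simp: mult.commute)
  then have "n < card (S -` {A} \<inter> K)"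
    using K_large by (metis order_less_le_trans mult_less_cancel1)
  then obtain B where B: "B \<subseteq> S -` {A} \<inter> K" "card B = n"
    by (meson less_imp_le obtain_subset_with_card_n)
  show thesis
  proof
    show "A \<subseteq> L" "card A = n" using A unfolding nsets_def by auto
    show "B \<subseteq> R" "card B = n" using B unfolding K_def by auto
    show "A \<times> B \<subseteq> G" using B S unfolding N_def by fastforce
  qed
qed

section \<open>Ranks in finite linear orders\<close>

definition rank :: "'a::linorder set \<Rightarrow> 'a \<Rightarrow> nat" where
  "rank S x = card {y \<in> S. y < x}"

lemma rank_less_rank_iff:
  assumes "finite S" "x \<in> S" "y \<in> S"
  shows "rank S x < rank S y \<longleftrightarrow> x < y"
proof
  assume "x < y"
  then have "{z \<in> S. z < x} \<subset> {z \<in> S. z < y}" using assms(2) by auto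
  then show "rank S x < rank S y" unfolding rank_def using assms(1) by (simp add: psubset_card_mono)
next
  assume "rank S x < rank S y"
  moreover have "rank S y \<le> rank S x" if "y \<le> x"
    unfolding rank_def using assms(1) that by (intro card_mono) auto
  ultimately show "x < y" by (meson not_le_imp_less leD)
qed

lemma bij_betw_rank:
  assumes "finite S"
  shows "bij_betw (rank S) S {..<card S}"
proof -
  have inj: "inj_on (rank S) S"
    by (rule inj_onI) (metis assms rank_less_rank_iff linorder_neqE less_irrefl)
  have "rank S x < card S" if "x \<in> S" for x
    unfolding rank_def using assms that by (intro psubset_card_mono) auto
  then have "rank S ` S \<subseteq> {..<card S}" by auto
  moreover have "card (rank S ` S) = card {..<card S}" using inj by (simp add: card_image)
  ultimately have "rank S ` S = {..<card S}" by (simp add: card_subset_eq)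
  with inj show ?thesis by (simp add: bij_betw_def)
qed

lemma card_rank_preimage:
  assumes "finite S"
  shows "card {x \<in> S. P (rank S x)} = card {t. t < card S \<and> P t}"
proof -
  have "bij_betw (rank S) {x \<in> S. P (rank S x)} {t. t < card S \<and> P t}"
    using bij_betw_rank[OF assms] unfolding bij_betw_def inj_on_def by (auto simp: image_iff)
  then show ?thesis by (rule bij_betw_same_card)
qed

lemma median_property_middle_third:
  fixes S :: "'a::linorder set" and Q :: "'a set \<Rightarrow> 'a \<Rightarrow> bool"
  assumes "finite S" "card S = 3 * n"
    and mono: "\<And>X Y j. Q X j \<Longrightarrow> Y \<subseteq> X \<Longrightarrow> Q Y j"
    and median: "\<And>X j. X \<subseteq> S \<Longrightarrow> card X = 2 * n + 1 \<Longrightarrow> j \<in> X \<Longrightarrow> rank X j = n \<Longrightarrow> Q X j"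
  obtains I where "I \<subseteq> S" "card I = n" "\<And>j. j \<in> I \<Longrightarrow> Q I j"
proof
  let ?r = "rank S"
  define I where "I = {j \<in> S. n \<le> ?r j \<and> ?r j < 2 * n}"
  show "I \<subseteq> S" unfolding I_def by auto
  have "{t. t < card S \<and> n \<le> t \<and> t < 2 * n} = {n..<2 * n}" using assms(2) by auto
  then show "card I = n"
    unfolding I_def using card_rank_preimage[OF assms(1), of "\<lambda>t. n \<le> t \<and> t < 2 * n"] by simp
  show "Q I j" if "j \<in> I" for j
  proof -
    define X where "X = {i \<in> S. ?r j - n \<le> ?r i \<and> ?r i \<le> ?r j + n}"
    have j: "j \<in> S" "n \<le> ?r j" "?r j < 2 * n" using that unfolding I_def by auto
    have "{t. t < card S \<and> ?r j - n \<le> t \<and> t \<le> ?r j + n} = {?r j - n..?r j + n}"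
      using j assms(2) by auto
    then have "card X = 2 * n + 1"
      unfolding X_def using card_rank_preimage[OF assms(1), of "\<lambda>t. ?r j - n \<le> t \<and> t \<le> ?r j + n"] j
      by simp
    moreover have "rank X j = n"
    proof -
      have "{i \<in> X. i < j} = {i \<in> S. ?r j - n \<le> ?r i \<and> ?r i < ?r j}"
        unfolding X_def using rank_less_rank_iff[OF assms(1) _ j(1)] by force
      moreover have "{t. t < card S \<and> ?r j - n \<le> t \<and> t < ?r j} = {?r j - n..<?r j}"
        using j assms(2) by auto
      ultimately show ?thesis
        unfolding rank_def[of X]
        using card_rank_preimage[OF assms(1), of "\<lambda>t. ?r j - n \<le> t \<and> t < ?r j"] j by simp
    qed
    moreover have "X \<subseteq> S" "j \<in> X" unfolding X_def using j by auto
    ultimately have "Q X j" using median by blast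
    moreover have "I \<subseteq> X" unfolding I_def X_def using j by auto
    ultimately show ?thesis by (rule mono)
  qed
qed

section \<open>Ramsey's theorem for two colours\<close>

definition arrows :: "nat \<Rightarrow> nat \<Rightarrow> nat \<Rightarrow> nat \<Rightarrow> bool" where
  "arrows N a b r \<longleftrightarrow> (\<forall>P :: nat set \<Rightarrow> bool.
     (\<exists>S \<subseteq> {1..N}. card S = a \<and> (\<forall>X \<subseteq> S. card X = r \<longrightarrow> P X)) \<or>
     (\<exists>S \<subseteq> {1..N}. card S = b \<and> (\<forall>X \<subseteq> S. card X = r \<longrightarrow> \<not> P X)))"

lemma ex_arrows: "\<exists>N. arrows N a b r"
proof -
  obtain N :: nat where N: "partn_lst {..<N} [a, b] r" using ramsey_full by blast
  have "(\<exists>S \<subseteq> {1..N}. card S = a \<and> (\<forall>X \<subseteq> S. card X = r \<longrightarrow> P X)) \<or>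
        (\<exists>S \<subseteq> {1..N}. card S = b \<and> (\<forall>X \<subseteq> S. card X = r \<longrightarrow> \<not> P X))" for P
  proof -
    define colour where "colour X = (if P (Suc ` X) then 0 else 1 :: nat)" for X
    have "colour \<in> nsets {..<N} r \<rightarrow> {..<2}" unfolding colour_def by auto
    then obtain c H where c: "c < 2" and H: "H \<in> nsets {..<N} ([a, b] ! c)"
      and mono: "colour ` nsets H r \<subseteq> {c}"
      using partn_lstE[OF N] by (metis length_Cons list.size(3) numeral_2_eq_2)
    have S: "Suc ` H \<subseteq> {1..N}" "card (Suc ` H) = [a, b] ! c"
      using H unfolding nsets_def by (auto simp: card_image)
    have colour_X: "(if P X then 0 else 1) = c" if "X \<subseteq> Suc ` H" "card X = r" for X
    proof -
      have "finite H" using H unfolding nsets_def by simp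
      then have "X \<in> nsets (Suc ` H) r" using that by (auto simp: nsets_def intro: finite_subset)
      then obtain Y where "Y \<in> nsets H r" "X = Suc ` Y" by (rule nset_image_obtains) simp
      then show ?thesis using mono unfolding colour_def by blast
    qed
    show ?thesis
    proof (cases "c = 0")
      case True
      then show ?thesis using S colour_X by (metis nth_Cons_0 zero_neq_one)
    next
      case False
      then have "c = 1" using c by simp
      then show ?thesis using S colour_X by (metis nth_Cons_Suc nth_Cons_0 One_nat_def zero_neq_one)
    qed
  qed
  then show ?thesis unfolding arrows_def by blast
qed

section \<open>Linked index sets\<close>

lemma partitioned_hypergraph_part:
  "partitioned_hypergraph N V E \<Longrightarrow> valid_pair N i j \<Longrightarrow> finite (V i j) \<and> V i j \<noteq> {}"
  unfolding partitioned_hypergraph_def by blast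

lemma partitioned_hypergraph_disjoint:
  "partitioned_hypergraph N V E \<Longrightarrow> valid_pair N i j \<Longrightarrow> valid_pair N i' j' \<Longrightarrow> (i, j) \<noteq> (i', j')
    \<Longrightarrow> V i j \<inter> V i' j' = {}"
  unfolding partitioned_hypergraph_def by blast

lemma card_link_pairs_ge_degree:
  assumes PH: "partitioned_hypergraph N V E" and g: "g \<in> V i k"
    and deg: "\<delta> \<le> triad_degree V E i j k g"
    and ijk: "1 \<le> i" "i < j" "j < k" "k \<le> N"
  shows "\<delta> * card (V i j) * card (V j k)
    \<le> card {(a, b) \<in> V i j \<times> V j k. {a, b, g} \<in> triad V E i j k}"
proof -
  let ?L = "{(a, b) \<in> V i j \<times> V j k. {a, b, g} \<in> triad V E i j k}"
  have ij: "finite (V i j)" "V i j \<noteq> {}" and jk: "finite (V j k)" "V j k \<noteq> {}"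
    using partitioned_hypergraph_part[OF PH] ijk by (auto simp: valid_pair_def)
  have disj: "V i j \<inter> V i k = {}" "V j k \<inter> V i k = {}"
    using partitioned_hypergraph_disjoint[OF PH] ijk by (auto simp: valid_pair_def)
  txt \<open>Disjointness of the parts makes \<open>g\<close> the \<open>V i k\<close>-vertex of every triad edge containing it.\<close>
  have "{e \<in> triad V E i j k. g \<in> e} \<subseteq> (\<lambda>(a, b). {a, b, g}) ` ?L"
  proof
    fix e assume e: "e \<in> {e \<in> triad V E i j k. g \<in> e}"
    then obtain a b c where abc: "a \<in> V i j" "b \<in> V i k" "c \<in> V j k" "e = {a, b, c}"
      unfolding triad_def in_triad_def by blast
    have "g \<noteq> a" "g \<noteq> c" using disj abc(1,3) g by auto
    then have "e = {a, c, g}" using e abc(4) by auto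
    then show "e \<in> (\<lambda>(a, b). {a, b, g}) ` ?L" using e abc by (intro image_eqI[of _ _ "(a, c)"]) auto
  qed
  moreover have "finite ?L" using ij jk by (auto intro: finite_subset[of _ "V i j \<times> V j k"])
  ultimately have "card {e \<in> triad V E i j k. g \<in> e} \<le> card ?L"
    by (meson card_image_le card_mono finite_imageI le_trans)
  moreover have "\<delta> * (card (V i j) * card (V j k)) \<le> card {e \<in> triad V E i j k. g \<in> e}"
    using deg ij jk unfolding triad_degree_def by (simp add: pos_le_divide_eq card_gt_0_iff)
  ultimately show ?thesis by (simp add: mult.assoc)
qed

text \<open>For the middle index \<open>j\<close>, \<open>x i\<close> plays the role of \<open>\<alpha> i j\<close> and \<open>y k\<close> that of \<open>\<beta> j k\<close>.\<close>

definition linked_at ::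
  "(nat \<Rightarrow> nat \<Rightarrow> 'v set) \<Rightarrow> 'v set set \<Rightarrow> (nat \<Rightarrow> nat \<Rightarrow> 'v) \<Rightarrow> nat set \<Rightarrow> nat \<Rightarrow> bool" where
  "linked_at V E \<gamma> X j \<longleftrightarrow> (\<exists>x y.
     (\<forall>i\<in>X. i < j \<longrightarrow> x i \<in> V i j) \<and> (\<forall>k\<in>X. j < k \<longrightarrow> y k \<in> V j k) \<and>
     (\<forall>i\<in>X. \<forall>k\<in>X. i < j \<longrightarrow> j < k \<longrightarrow> {x i, y k, \<gamma> i k} \<in> triad V E i j k))"

lemma linked_at_subset:
  assumes "linked_at V E \<gamma> X j" "Y \<subseteq> X"
  shows "linked_at V E \<gamma> Y j"
proof -
  obtain x y where "(\<forall>i\<in>X. i < j \<longrightarrow> x i \<in> V i j) \<and> (\<forall>k\<in>X. j < k \<longrightarrow> y k \<in> V j k) \<and>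
      (\<forall>i\<in>X. \<forall>k\<in>X. i < j \<longrightarrow> j < k \<longrightarrow> {x i, y k, \<gamma> i k} \<in> triad V E i j k)"
    using assms(1) unfolding linked_at_def by blast
  then show ?thesis
    unfolding linked_at_def using assms(2) by (rule_tac exI[of _ x], rule_tac exI[of _ y]) (meson subsetD)
qed

lemma linked_at_from_min_degree:
  assumes PH: "partitioned_hypergraph N V E"
    and gam: "\<And>i k. valid_pair N i k \<Longrightarrow> \<gamma> i k \<in> V i k"
    and deg: "\<And>i j k. 1 \<le> i \<Longrightarrow> i < j \<Longrightarrow> j < k \<Longrightarrow> k \<le> N \<Longrightarrow> \<delta> \<le> triad_degree V E i j k (\<gamma> i k)"
    and Lft: "Lft \<subseteq> {1..<j}" "Lft \<noteq> {}" and Rgt: "Rgt \<subseteq> {j<..N}" and "j \<le> N"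
    and small_n: "n \<le> \<delta>/2 * card Lft"
    and large_Rgt: "(card Lft choose n) * n < \<delta>/2 * card Rgt"
  obtains A B where "A \<subseteq> Lft" "B \<subseteq> Rgt" "card A = n" "card B = n"
    "linked_at V E \<gamma> (A \<union> {j} \<union> B) j"
proof -
  let ?T = "\<lambda>i k a b. {a, b, \<gamma> i k} \<in> triad V E i j k"
  have fin: "finite Lft" "finite Rgt" using Lft Rgt finite_subset by blast+
  have Lft_pair: "valid_pair N i j" if "i \<in> Lft" for i
    using that Lft \<open>j \<le> N\<close> by (auto simp: valid_pair_def)
  have Rgt_pair: "valid_pair N j k" if "k \<in> Rgt" for k
    using that Rgt Lft by (auto simp: valid_pair_def)
  have V_Lft: "finite (V i j) \<and> V i j \<noteq> {}" if "i \<in> Lft" for i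
    using partitioned_hypergraph_part[OF PH Lft_pair[OF that]] .
  have V_Rgt: "finite (V j k) \<and> V j k \<noteq> {}" if "k \<in> Rgt" for k
    using partitioned_hypergraph_part[OF PH Rgt_pair[OF that]] .
  have dense: "\<delta> * card (V i j) * card (V j k) \<le> card {(a, b) \<in> V i j \<times> V j k. ?T i k a b}"
    if "i \<in> Lft" "k \<in> Rgt" for i k
  proof -
    have "1 \<le> i" "i < j" "j < k" "k \<le> N" using that Lft Rgt by auto
    then show ?thesis
      by (intro card_link_pairs_ge_degree[OF PH] gam deg) (auto simp: valid_pair_def)
  qed
  obtain x y where x: "\<And>i. i \<in> Lft \<Longrightarrow> x i \<in> V i j" and y: "\<And>k. k \<in> Rgt \<Longrightarrow> y k \<in> V j k"
    and hits: "\<delta> * card Lft * card Rgt \<le> card {(i, k) \<in> Lft \<times> Rgt. ?T i k (x i) (y k)}"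
    using exists_choices_many_hits[of Lft Rgt "\<lambda>i. V i j" "\<lambda>k. V j k" \<delta> ?T] fin V_Lft V_Rgt dense
    by blast
  obtain A B where AB: "A \<subseteq> Lft" "B \<subseteq> Rgt" "card A = n" "card B = n"
    and complete: "A \<times> B \<subseteq> {(i, k) \<in> Lft \<times> Rgt. ?T i k (x i) (y k)}"
    using dense_bipartite_contains_complete[OF fin Lft(2) _ hits small_n large_Rgt] by blast
  have "linked_at V E \<gamma> (A \<union> {j} \<union> B) j"
    unfolding linked_at_def
  proof (intro exI conjI ballI impI)
    fix i k assume "i \<in> A \<union> {j} \<union> B" "k \<in> A \<union> {j} \<union> B" "i < j" "j < k"
    then have "i \<in> A" "k \<in> B" using AB(1,2) Lft Rgt by auto
    then show "?T i k (x i) (y k)" using complete by blast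
  qed (use AB Lft Rgt x y in auto)
  with AB show thesis using that by blast
qed

lemma exists_median_linked_subset:
  assumes PH: "partitioned_hypergraph N V E"
    and gam: "\<And>i k. valid_pair N i k \<Longrightarrow> \<gamma> i k \<in> V i k"
    and deg: "\<And>i j k. 1 \<le> i \<Longrightarrow> i < j \<Longrightarrow> j < k \<Longrightarrow> k \<le> N \<Longrightarrow> \<delta> \<le> triad_degree V E i j k (\<gamma> i k)"
    and "0 < M1" "n \<le> \<delta>/2 * M1" "(M1 choose n) * n < \<delta>/2 * M2"
    and S: "S \<subseteq> {1..N}" "card S = M1 + 1 + M2"
  obtains X where "X \<subseteq> S" "card X = 2 * n + 1" "\<And>j'. j' \<in> X \<Longrightarrow> rank X j' = n \<Longrightarrow> linked_at V E \<gamma> X j'"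
proof -
  have "finite S" using S(1) finite_subset by blast
  have "M1 \<in> rank S ` S" using bij_betw_imp_surj_on[OF bij_betw_rank[OF \<open>finite S\<close>]] S(2) by simp
  then obtain j where j: "j \<in> S" "rank S j = M1" by blast
  define Lft where "Lft = {i \<in> S. i < j}"
  define Rgt where "Rgt = {k \<in> S. j < k}"
  have card_Lft: "card Lft = M1" using j(2) unfolding Lft_def rank_def by simp
  have "Rgt = {k \<in> S. M1 < rank S k}"
    unfolding Rgt_def using rank_less_rank_iff[OF \<open>finite S\<close> j(1)] j(2) by auto
  moreover have "{t. t < card S \<and> M1 < t} = {M1<..<M1 + 1 + M2}" using S(2) by auto
  ultimately have card_Rgt: "card Rgt = M2"
    using card_rank_preimage[OF \<open>finite S\<close>, of "\<lambda>t. M1 < t"] by simp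
  obtain A B where AB: "A \<subseteq> Lft" "B \<subseteq> Rgt" "card A = n" "card B = n"
    and linked: "linked_at V E \<gamma> (A \<union> {j} \<union> B) j"
  proof (rule linked_at_from_min_degree[OF PH gam deg])
    show "Lft \<subseteq> {1..<j}" "Rgt \<subseteq> {j<..N}" "j \<le> N" unfolding Lft_def Rgt_def using S(1) j(1) by auto
    show "Lft \<noteq> {}" using card_Lft \<open>0 < M1\<close> by auto
  qed (use assms card_Lft card_Rgt in auto)
  define X where "X = A \<union> {j} \<union> B"
  have "finite A" "finite B"
    using AB(1,2) \<open>finite S\<close> unfolding Lft_def Rgt_def by (auto intro: finite_subset)
  moreover have "j \<notin> A" "j \<notin> B" "A \<inter> B = {}" using AB(1,2) unfolding Lft_def Rgt_def by fastforce+
  ultimately have "finite X" "card X = 2 * n + 1"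
    unfolding X_def using AB(3,4) by (simp_all add: card_Un_disjoint)
  have "{i \<in> X. i < j} = A" unfolding X_def using AB(1,2) unfolding Lft_def Rgt_def by auto
  then have rank_j: "rank X j = n" using AB(3) by (simp add: rank_def)
  show thesis
  proof
    show "X \<subseteq> S" unfolding X_def using AB j unfolding Lft_def Rgt_def by auto
    show "card X = 2 * n + 1" by fact
    fix j' assume "j' \<in> X" "rank X j' = n"
    then have "j' = j"
      using inj_onD[OF bij_betw_imp_inj_on[OF bij_betw_rank[OF \<open>finite X\<close>]]] rank_j
      unfolding X_def by auto
    then show "linked_at V E \<gamma> X j'" using linked unfolding X_def by simp
  qed
qed

lemma linked_everywhere_imp_witnesses:
  assumes "\<And>j. j \<in> I \<Longrightarrow> linked_at V E \<gamma> I j"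
  shows "\<exists>\<alpha> \<beta>. (\<forall>i\<in>I. \<forall>j\<in>I. i < j \<longrightarrow> \<alpha> i j \<in> V i j \<and> \<beta> i j \<in> V i j) \<and>
    (\<forall>i\<in>I. \<forall>j\<in>I. \<forall>k\<in>I. i < j \<and> j < k \<longrightarrow> {\<alpha> i j, \<beta> j k, \<gamma> i k} \<in> triad V E i j k)"
proof -
  define W where "W j x y \<longleftrightarrow> (\<forall>i\<in>I. i < j \<longrightarrow> x i \<in> V i j) \<and> (\<forall>k\<in>I. j < k \<longrightarrow> y k \<in> V j k) \<and>
      (\<forall>i\<in>I. \<forall>k\<in>I. i < j \<longrightarrow> j < k \<longrightarrow> {x i, y k, \<gamma> i k} \<in> triad V E i j k)" for j x y
  have "\<forall>j\<in>I. \<exists>x y. W j x y" using assms unfolding linked_at_def W_def by blast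
  then obtain x where "\<forall>j\<in>I. \<exists>y. W j (x j) y" by (metis bchoice)
  then obtain y where W: "\<forall>j\<in>I. W j (x j) (y j)" by (metis bchoice)
  show ?thesis
  proof (rule exI[of _ "\<lambda>i j. x j i"], rule exI[of _ y], intro conjI ballI impI)
    fix i j assume "i \<in> I" "j \<in> I" "i < j"
    moreover have "W i (x i) (y i)" "W j (x j) (y j)" using W \<open>i \<in> I\<close> \<open>j \<in> I\<close> by blast+
    ultimately show "x j i \<in> V i j" "y i j \<in> V i j" unfolding W_def by simp_all
  next
    fix i j k assume "i \<in> I" "j \<in> I" "k \<in> I" "i < j \<and> j < k"
    moreover have "W j (x j) (y j)" using W \<open>j \<in> I\<close> by blast
    ultimately show "{x j i, y j k, \<gamma> i k} \<in> triad V E i j k" unfolding W_def by simp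
  qed
qed

lemma exists_linked_index_set:
  assumes PH: "partitioned_hypergraph N V E"
    and gam: "\<forall>i k. valid_pair N i k \<longrightarrow> \<gamma> i k \<in> V i k"
    and deg: "\<forall>i j k. 1 \<le> i \<and> i < j \<and> j < k \<and> k \<le> N \<longrightarrow> triad_degree V E i j k (\<gamma> i k) \<ge> \<delta>"
    and M1: "0 < M1" "n \<le> \<delta>/2 * M1" and M2: "(M1 choose n) * n < \<delta>/2 * M2"
    and N: "arrows N (3 * n) (M1 + 1 + M2) (2 * n + 1)"
  obtains I where "I \<subseteq> {1..N}" "card I = n" "\<And>j. j \<in> I \<Longrightarrow> linked_at V E \<gamma> I j"
  using N[unfolded arrows_def, THEN spec, of "\<lambda>X. \<forall>j\<in>X. rank X j = n \<longrightarrow> linked_at V E \<gamma> X j"]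
proof (elim disjE exE conjE)
  fix S assume S: "S \<subseteq> {1..N}" "card S = 3 * n"
    and linked: "\<forall>X \<subseteq> S. card X = 2 * n + 1 \<longrightarrow> (\<forall>j\<in>X. rank X j = n \<longrightarrow> linked_at V E \<gamma> X j)"
  have "finite S" using S(1) finite_subset by blast
  then obtain I where "I \<subseteq> S" "card I = n" "\<And>j. j \<in> I \<Longrightarrow> linked_at V E \<gamma> I j"
  proof (rule median_property_middle_third[OF _ S(2)])
    show "linked_at V E \<gamma> X j" if "X \<subseteq> S" "card X = 2 * n + 1" "j \<in> X" "rank X j = n" for X j
      using linked that by blast
  qed (use linked_at_subset that in blast)+
  with S(1) show thesis using that by blast
next
  fix S assume S: "S \<subseteq> {1..N}" "card S = M1 + 1 + M2"
    and unlinked: "\<forall>X \<subseteq> S. card X = 2 * n + 1 \<longrightarrow> \<not> (\<forall>j\<in>X. rank X j = n \<longrightarrow> linked_at V E \<gamma> X j)"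
  obtain X where "X \<subseteq> S" "card X = 2 * n + 1" "\<forall>j\<in>X. rank X j = n \<longrightarrow> linked_at V E \<gamma> X j"
  proof (rule exists_median_linked_subset[OF PH _ _ M1 M2 S])
    show "\<gamma> i k \<in> V i k" if "valid_pair N i k" for i k using gam that by blast
    show "\<delta> \<le> triad_degree V E i j k (\<gamma> i k)" if "1 \<le> i" "i < j" "j < k" "k \<le> N" for i j k
      using deg that by blast
  qed (use that in blast)
  with unlinked show thesis by blast
qed

theorem lemma4p6:
  fixes \<delta> :: real and n :: nat
  assumes "\<delta> > 0"
  shows "\<exists>N::nat. \<forall>(V :: nat \<Rightarrow> nat \<Rightarrow> 'v set) (E :: 'v set set) (\<gamma> :: nat \<Rightarrow> nat \<Rightarrow> 'v).
           partitioned_hypergraph N V E \<longrightarrow>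
           (\<forall>i k. valid_pair N i k \<longrightarrow> \<gamma> i k \<in> V i k) \<longrightarrow>
           (\<forall>i j k. 1 \<le> i \<and> i < j \<and> j < k \<and> k \<le> N \<longrightarrow> triad_degree V E i j k (\<gamma> i k) \<ge> \<delta>) \<longrightarrow>
           (\<exists>I \<subseteq> {1..N}. card I = n \<and>
              (\<exists>\<alpha> \<beta> :: nat \<Rightarrow> nat \<Rightarrow> 'v.
                 (\<forall>i\<in>I. \<forall>j\<in>I. i < j \<longrightarrow> \<alpha> i j \<in> V i j \<and> \<beta> i j \<in> V i j) \<and>
                 (\<forall>i\<in>I. \<forall>j\<in>I. \<forall>k\<in>I. i < j \<and> j < k \<longrightarrow>
                    {\<alpha> i j, \<beta> j k, \<gamma> i k} \<in> triad V E i j k)))"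
proof -
  obtain m :: nat where "2 * n / \<delta> \<le> m" using real_arch_simple by blast
  then have M1: "0 < Suc m" "n \<le> \<delta>/2 * Suc m" using assms by (auto simp: field_simps)
  obtain M2 :: nat where "(Suc m choose n) * n < M2 * (\<delta>/2)"
    using ex_less_of_nat_mult[of "\<delta>/2"] assms by auto
  then have M2: "(Suc m choose n) * n < \<delta>/2 * M2" by (simp add: mult.commute)
  obtain N where N: "arrows N (3 * n) (Suc m + 1 + M2) (2 * n + 1)" using ex_arrows by blast
  show ?thesis
  proof (intro exI[of _ N] allI impI, goal_cases)
    case (1 V E \<gamma>)
    obtain I where I: "I \<subseteq> {1..N}" "card I = n" "\<And>j. j \<in> I \<Longrightarrow> linked_at V E \<gamma> I j"
      using exists_linked_index_set[OF 1 M1 M2 N] by blast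
    show ?case
      by (intro exI[of _ I] conjI I(1,2) linked_everywhere_imp_witnesses I(3))
  qed
qed

end
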